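(* Consider $n=\sum_{i=1}^L n_i$ component lifetimes $T_j^{(i)}$, $j=1,\dots,n_i$, $i=1,\dots,L$ ($L\ge1$), where components of type $i$ have common reliability function $\bar F_i$, the lifetimes within each type are exchangeable, and the joint reliability function is given by a survival copula $\hat C$: $$P(T_j^{(i)}>t_j^{(i)},\ j=1,\dots,n_i,\ i=1,\dots,L)=\hat C\big(\bar F_1(t_1^{(1)}),\dots,\bar F_1(t_{n_1}^{(1)}),\dots,\bar F_L(t_1^{(L)}),\dots,\bar F_L(t_{n_L}^{(L)})\big).$$ (a) For $\tau>0$ and integers $0\le j_k\le n_k$, let $$B(\tau,j_1,\dots,j_L)=P\big(T_1^{(k)}\le\tau,\dots,T_{j_k}^{(k)}\le\tau,\ T_{j_k+1}^{(k)}>\tau,\dots,T_{n_k}^{(k)}>\tau\ \text{for all } k=1,\dots,L\big).$$ Then $$B(\tau,j_1,\dots,j_L)=\sum_{b_1=0}^{j_1}\cdots\sum_{b_L=0}^{j_L}(-1)^{b_1+\cdots+ b_L}\binom{j_1}{b_1}\cdots \binom{j_L}{b_L} \hat{C}(\underbrace{\bar{F}_1(\tau)}_{n_1-j_1+b_1},\underbrace{1}_{j_1-b_1},\dots,\underbrace{\bar{F}_L(\tau)}_{n_L-j_L+b_L},\underbrace{1}_{j_L-b_L}).$$ (b) Fix $i\in\{1,\dots,L\}$, integers $0\le l_k\le m_k\le n_k$ for $k\neq i$ and $0\le l_i\le m_i\le n_i-1$, and $0<s<s+\delta$, $s<\tau$. Let $$A_{\mathbf{m}, \mathbf{l}}^{(i)}(s,s+\delta,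 \tau)=P\Big(T_1^{(k)}>\tau,\dots,T_{l_k}^{(k)}>\tau,\ s<T_{l_k+1}^{(k)}\le\tau,\dots,s<T_{m_k}^{(k)}\le\tau,\ T_{m_k+1}^{(k)}\le s,\dots,T_{n_k}^{(k)}\le s\ \text{for } k\neq i;\ T_1^{(i)}>\tau,\dots,T_{l_i}^{(i)}>\tau,\ s<T_{l_i+1}^{(i)}\le\tau,\dots,s<T_{m_i}^{(i)}\le\tau,\ s<T_{m_i+1}^{(i)}\le s+\delta,\ T_{m_i+2}^{(i)}\le s,\dots,T_{n_i}^{(i)}\le s\Big).$$ Then $$A_{\mathbf{m}, \mathbf{l}}^{(i)}(s,s+\delta, \tau)=\sum_{j_1=0}^{n_1-m_1}\cdots\sum_{j_i=0}^{n_i-m_i-1}\cdots\sum_{j_L=0}^{n_L-m_L}(-1)^{j_1+\cdots + j_L}\binom{n_1-m_1}{j_1}\cdots \binom{n_i-m_i-1}{j_i}\cdots\binom{n_L-m_L}{j_L}\sum_{d_1=0}^{m_1-l_1}\cdots\sum_{d_L=0}^{m_L-l_L}(-1)^{d_1+\cdots + d_L}\binom{m_1-l_1}{d_1}\cdots \binom{m_L-l_L}{d_L}$$ $$\times \Big[\hat{C}\big(\underbrace{\bar{F}_k(\tau)}_{l_k+d_k}, \underbrace{\bar{F}_k(s)}_{m_k-l_k+j_k-d_k},\underbrace{1}_{n_k-m_k-j_k}\ (k\neq i);\ \underbrace{\bar{F}_i(\tau)}_{l_i+d_i}, \underbrace{\bar{F}_i(s)}_{m_i-l_i+j_i-d_i+1},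 \underbrace{1}_{n_i-m_i-j_i-1}\big)-\hat{C}\big(\underbrace{\bar{F}_k(\tau)}_{l_k+d_k}, \underbrace{\bar{F}_k(s)}_{m_k-l_k+j_k-d_k},\underbrace{1}_{n_k-m_k-j_k}\ (k\neq i);\ \underbrace{\bar{F}_i(\tau)}_{l_i+d_i}, \underbrace{\bar{F}_i(s)}_{m_i-l_i+j_i-d_i}, \bar{F}_i(s+\delta), \underbrace{1}_{n_i-m_i-j_i-1} \big)\Big].$$
   Context: In the arguments of $\hat C$, $\underbrace{u}_{m}$ denotes $m$ consecutive repetitions of the value $u$; the arguments are arranged in blocks, the block for type $k$ consisting of the $n_k$ arguments associated with the components of type $k$ (in (b), the block for each type $k\ne i$ and the block for type $i$ are placed in their positions $k$ and $i$ among the $L$ blocks). By within-type exchangeability the order of arguments inside a block is immaterial. *)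

theory Defs
  imports "HOL-Probability.Probability" "HOL-Combinatorics.Permutations"
begin

text \<open>Index set of the components: type k < L (types are numbered 0..L-1),
  component j < n k within type k (numbered 0..n k - 1).\<close>
definition idx :: "nat \<Rightarrow> (nat \<Rightarrow> nat) \<Rightarrow> (nat \<times> nat) set" where
  "idx L n = Sigma {..<L} (\<lambda>k. {..<n k})"

definition is_copula :: "'i set \<Rightarrow> (('i \<Rightarrow> real) \<Rightarrow> real) \<Rightarrow> bool" where
  "is_copula I C \<longleftrightarrow>
     finite I \<and>
     (\<forall>u \<in> I \<rightarrow>\<^sub>E {0..1}. C u \<in> {0..1}) \<and>
     (\<forall>u \<in> I \<rightarrow>\<^sub>E {0..1}. (\<exists>i\<in>I. u i = 0) \<longrightarrow> C u = 0) \<and>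
     (\<forall>i\<in>I. \<forall>x\<in>{0..1}. C (restrict (\<lambda>j. if j = i then x else 1) I) = x) \<and>
     (\<forall>a \<in> I \<rightarrow>\<^sub>E {0..1}. \<forall>b \<in> I \<rightarrow>\<^sub>E {0..1}. (\<forall>i\<in>I. a i \<le> b i) \<longrightarrow>
        0 \<le> (\<Sum>S\<in>Pow I. (-1::real) ^ card S * C (restrict (\<lambda>i. if i \<in> S then a i else b i) I)))"

end

(*
  Every event of the form "lo < T <= hi componentwise", with some bounds absent, is handled by
  inclusion-exclusion over the upper bounds: its probability is an alternating sum of joint
  survival probabilities P(T > theta). Such a survival probability is a value of the survival
  copula, an absent threshold (theta = -infinity) contributing the argument 1; this follows from
  the defining identity by continuity of the measure along increasing events together with the
  Lipschitz continuity of copulas. Exchangeability within each type allows the thresholds of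
  every type to be sorted, so the copula value depends only on how many components of each type
  carry each threshold. Grouping the subsets in the inclusion-exclusion sum by these counts
  produces the binomial coefficients.
*)

theory Submission
  imports Defs
begin

section \<open>Copulas\<close>

definition copula_volume :: "'i set \<Rightarrow> (('i \<Rightarrow> real) \<Rightarrow> real) \<Rightarrow> ('i \<Rightarrow> real) \<Rightarrow> ('i \<Rightarrow> real) \<Rightarrow> real" where
  "copula_volume I C a b = (\<Sum>S\<in>Pow I. (-1) ^ card S * C (restrict (\<lambda>i. if i \<in> S then a i else b i) I))"

lemma copula_finite: "is_copula I C \<Longrightarrow> finite I"
  by (simp add: is_copula_def)

lemma copula_grounded:
  "is_copula I C \<Longrightarrow> u \<in> I \<rightarrow>\<^sub>E {0..1} \<Longrightarrow> i \<in> I \<Longrightarrow> u i = 0 \<Longrightarrow> C u = 0"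
  unfolding is_copula_def by blast

lemma copula_margin:
  "is_copula I C \<Longrightarrow> i \<in> I \<Longrightarrow> x \<in> {0..1} \<Longrightarrow> C (restrict (\<lambda>j. if j = i then x else 1) I) = x"
  unfolding is_copula_def by blast

lemma copula_volume_nonneg:
  "is_copula I C \<Longrightarrow> a \<in> I \<rightarrow>\<^sub>E {0..1} \<Longrightarrow> b \<in> I \<rightarrow>\<^sub>E {0..1} \<Longrightarrow> (\<forall>i\<in>I. a i \<le> b i) \<Longrightarrow>
    0 \<le> copula_volume I C a b"
  unfolding is_copula_def copula_volume_def by blast

lemma copula_volume_eq_sum_Pow:
  assumes cop: "is_copula I C" and "J \<subseteq> I" and a: "a \<in> I \<rightarrow>\<^sub>E {0..1}" and b: "b \<in> I \<rightarrow>\<^sub>E {0..1}"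
    and zero: "\<forall>i\<in>I - J. a i = 0"
  shows "copula_volume I C a b = (\<Sum>S\<in>Pow J. (-1) ^ card S * C (restrict (\<lambda>i. if i \<in> S then a i else b i) I))"
  unfolding copula_volume_def
proof (rule sum.mono_neutral_right)
  show "finite (Pow I)" using copula_finite[OF cop] by simp
  show "Pow J \<subseteq> Pow I" using \<open>J \<subseteq> I\<close> by auto
  show "\<forall>S\<in>Pow I - Pow J. (-1) ^ card S * C (restrict (\<lambda>i. if i \<in> S then a i else b i) I) = 0"
  proof
    fix S assume "S \<in> Pow I - Pow J"
    then obtain i where "i \<in> S" "i \<in> I - J" by auto
    then have "C (restrict (\<lambda>i. if i \<in> S then a i else b i) I) = 0"
      using a b zero by (intro copula_grounded[OF cop, of _ i]) (auto simp: PiE_iff)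
    then show "(-1) ^ card S * C (restrict (\<lambda>i. if i \<in> S then a i else b i) I) = 0" by simp
  qed
qed

lemma copula_mono:
  assumes cop: "is_copula I C" and p: "p \<in> I \<rightarrow>\<^sub>E {0..1}" and "a \<in> I"
    and "0 \<le> x" "x \<le> y" "y \<le> 1"
  shows "C (p(a := x)) \<le> C (p(a := y))"
proof -
  let ?lo = "restrict (\<lambda>i. if i = a then x else 0) I"
  have "0 \<le> copula_volume I C ?lo (p(a := y))"
    using assms by (intro copula_volume_nonneg) (auto simp: PiE_iff extensional_def)
  also have "\<dots> = (\<Sum>S\<in>{{}, {a}}. (-1) ^ card S * C (restrict (\<lambda>i. if i \<in> S then ?lo i else (p(a := y)) i) I))"
    using assms by (subst copula_volume_eq_sum_Pow[where J = "{a}"]) (auto simp: PiE_iff extensional_def Pow_insert)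
  also have "\<dots> = C (p(a := y)) - C (p(a := x))"
    using assms by (auto simp: PiE_iff extensional_def intro!: arg_cong2[where f = "(-)"] arg_cong[where f = C])
  finally show ?thesis by simp
qed

lemma copula_2_increasing:
  assumes cop: "is_copula I C" and q: "q \<in> I \<rightarrow>\<^sub>E {0..1}" and "a \<in> I" "b \<in> I" "a \<noteq> b"
    and "0 \<le> x" "x \<le> y" "y \<le> 1" and "0 \<le> z" "z \<le> z'" "z' \<le> 1"
  shows "C (q(b := z, a := y)) - C (q(b := z, a := x)) \<le> C (q(b := z', a := y)) - C (q(b := z', a := x))"
proof -
  let ?lo = "restrict (\<lambda>i. if i = a then x else if i = b then z else 0) I"
  let ?hi = "q(b := z', a := y)"
  define v where "v S = restrict (\<lambda>i. if i \<in> S then ?lo i else ?hi i) I" for S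
  have "0 \<le> copula_volume I C ?lo ?hi"
    using assms by (intro copula_volume_nonneg) (auto simp: PiE_iff extensional_def)
  also have "\<dots> = (\<Sum>S\<in>{{}, {a}, {b}, {a, b}}. (-1) ^ card S * C (v S))"
    using assms unfolding v_def
    by (subst copula_volume_eq_sum_Pow[where J = "{a, b}"])
      (auto simp: PiE_iff extensional_def Pow_insert insert_commute)
  also have "\<dots> = C (v {}) - C (v {a}) - C (v {b}) + C (v {a, b})"
    using \<open>a \<noteq> b\<close> by simp
  finally have "0 \<le> C (v {}) - C (v {a}) - C (v {b}) + C (v {a, b})" .
  moreover have "v {} = ?hi" "v {a} = q(b := z', a := x)" "v {b} = q(b := z, a := y)"
    "v {a, b} = q(b := z, a := x)"
    using assms by (auto simp: v_def PiE_iff extensional_def)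
  ultimately show ?thesis by simp
qed

lemma copula_increment_le:
  assumes cop: "is_copula I C" and p: "p \<in> I \<rightarrow>\<^sub>E {0..1}" and a: "a \<in> I"
    and xy: "0 \<le> x" "x \<le> y" "y \<le> 1"
  shows "C (p(a := y)) - C (p(a := x)) \<le> y - x"
proof -
  define D where "D q = C (q(a := y)) - C (q(a := x))" for q
  define raise where "raise J = restrict (\<lambda>i. if i \<in> J then 1 else p i) I" for J
  have raise_PiE: "raise J \<in> I \<rightarrow>\<^sub>E {0..1}" for J
    using p by (auto simp: raise_def PiE_iff)
  \<comment> \<open>Raising the other coordinates to 1 one at a time can only enlarge the increment
    (2-increasingness); at the all-ones point the increment is \<open>y - x\<close> (uniform margins).\<close>
  have "D p \<le> D (raise J)" if "J \<subseteq> I - {a}" for J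
    using finite_subset[OF that finite_Diff[OF copula_finite[OF cop]]] that
  proof (induction J rule: finite_induct)
    case empty
    have "raise {} = p" using p by (auto simp: raise_def PiE_iff extensional_def)
    then show ?case by simp
  next
    case (insert b J)
    have b: "b \<in> I" "b \<noteq> a" "0 \<le> p b" "p b \<le> 1" using insert p by (auto simp: PiE_iff)
    have "raise J = (raise J)(b := p b)" "raise (insert b J) = (raise J)(b := 1)"
      using insert b by (auto simp: raise_def)
    then have "D (raise J) \<le> D (raise (insert b J))"
      using copula_2_increasing[OF cop raise_PiE a b(1) b(2)[symmetric] xy b(3,4) order.refl]
      unfolding D_def by metis
    then show ?case using insert by simp
  qed
  from this[of "I - {a}"] have "D p \<le> D (raise (I - {a}))" by simp
  moreover have "D (raise (I - {a})) = y - x"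
  proof -
    have "(raise (I - {a}))(a := v) = restrict (\<lambda>j. if j = a then v else 1) I" for v
      using a by (auto simp: raise_def)
    then show ?thesis using copula_margin[OF cop a] xy by (simp add: D_def)
  qed
  ultimately show ?thesis unfolding D_def by linarith
qed

lemma copula_Lipschitz_coordinate:
  assumes cop: "is_copula I C" and "p \<in> I \<rightarrow>\<^sub>E {0..1}" and "a \<in> I" and "x \<in> {0..1}" "y \<in> {0..1}"
  shows "\<bar>C (p(a := y)) - C (p(a := x))\<bar> \<le> \<bar>y - x\<bar>"
  using assms copula_increment_le[OF assms(1-3), of x y] copula_mono[OF assms(1-3), of x y]
    copula_increment_le[OF assms(1-3), of y x] copula_mono[OF assms(1-3), of y x]
  by (cases "x \<le> y") auto

lemma copula_Lipschitz:
  assumes cop: "is_copula I C" and u: "u \<in> I \<rightarrow>\<^sub>E {0..1}" and w: "w \<in> I \<rightarrow>\<^sub>E {0..1}"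
  shows "\<bar>C u - C w\<bar> \<le> (\<Sum>i\<in>I. \<bar>u i - w i\<bar>)"
proof -
  define mix where "mix J = restrict (\<lambda>i. if i \<in> J then w i else u i) I" for J
  have mix_PiE: "mix J \<in> I \<rightarrow>\<^sub>E {0..1}" for J
    using u w by (auto simp: mix_def PiE_iff)
  have "\<bar>C u - C (mix J)\<bar> \<le> (\<Sum>i\<in>J. \<bar>u i - w i\<bar>)" if "J \<subseteq> I" for J
    using finite_subset[OF that copula_finite[OF cop]] that
  proof (induction J rule: finite_induct)
    case empty
    have "mix {} = u" using u by (auto simp: mix_def PiE_iff extensional_def)
    then show ?case by simp
  next
    case (insert b J)
    have "b \<in> I" using insert by simp
    have "mix J = (mix J)(b := u b)" "mix (insert b J) = (mix J)(b := w b)"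
      using insert by (auto simp: mix_def)
    moreover have "\<bar>C ((mix J)(b := w b)) - C ((mix J)(b := u b))\<bar> \<le> \<bar>w b - u b\<bar>"
      using u w \<open>b \<in> I\<close> by (intro copula_Lipschitz_coordinate[OF cop mix_PiE]) (auto simp: PiE_iff)
    ultimately have "\<bar>C (mix J) - C (mix (insert b J))\<bar> \<le> \<bar>u b - w b\<bar>"
      by (metis abs_minus_commute)
    then show ?case using insert by simp
  qed
  moreover have "mix I = w" using w by (auto simp: mix_def PiE_iff extensional_def)
  ultimately show ?thesis by (metis order_refl)
qed

section \<open>Alternating sums over subsets\<close>

lemma sum_Pow_Un:
  assumes "finite A" "finite B" "A \<inter> B = {}"
  shows "(\<Sum>S\<in>Pow (A \<union> B). f S) = (\<Sum>X\<in>Pow A. \<Sum>Y\<in>Pow B. f (X \<union> Y))"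
proof -
  have "bij_betw (\<lambda>(X, Y). X \<union> Y) (Pow A \<times> Pow B) (Pow (A \<union> B))"
  proof (rule bij_betwI[where g = "\<lambda>S. (S \<inter> A, S \<inter> B)"])
    show "(\<lambda>S. (S \<inter> A, S \<inter> B)) \<in> Pow (A \<union> B) \<rightarrow> Pow A \<times> Pow B" by auto
  qed (use assms in auto)
  then have "(\<Sum>S\<in>Pow (A \<union> B). f S) = (\<Sum>(X, Y)\<in>Pow A \<times> Pow B. f (X \<union> Y))"
    by (simp add: sum.reindex_bij_betw[symmetric] case_prod_unfold)
  then show ?thesis by (simp add: sum.cartesian_product)
qed

lemma sum_Pow_insert:
  assumes "finite A" "a \<notin> A"
  shows "(\<Sum>S\<in>Pow (insert a A). f S) = (\<Sum>S\<in>Pow A. f S) + (\<Sum>S\<in>Pow A. f (insert a S))"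
proof -
  have "(\<Sum>S\<in>Pow (insert a A). f S) = (\<Sum>X\<in>Pow A. \<Sum>Y\<in>Pow {a}. f (X \<union> Y))"
    using sum_Pow_Un[of A "{a}" f] assms by simp
  also have "Pow {a} = {{}, {a}}" by blast
  finally show ?thesis by (simp add: sum.distrib)
qed

lemma sum_PiE_Pow_card:
  fixes h :: "('k \<Rightarrow> nat) \<Rightarrow> 'b::comm_semiring_1"
  assumes "finite K" and fin: "\<And>k. k \<in> K \<Longrightarrow> finite (A k)" and card: "\<And>k. k \<in> K \<Longrightarrow> card (A k) = m k"
  shows "(\<Sum>X\<in>PiE K (\<lambda>k. Pow (A k)). h (\<lambda>k\<in>K. card (X k)))
       = (\<Sum>bs\<in>PiE K (\<lambda>k. {0..m k}). of_nat (\<Prod>k\<in>K. m k choose bs k) * h bs)"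
proof -
  have fibre: "{X \<in> PiE K (\<lambda>k. Pow (A k)). (\<lambda>k\<in>K. card (X k)) = bs}
      = PiE K (\<lambda>k. {Y. Y \<subseteq> A k \<and> card Y = bs k})" if "bs \<in> PiE K (\<lambda>k. {0..m k})" for bs
    using that by (auto simp: PiE_iff extensional_def fun_eq_iff)
  have "(\<Sum>X\<in>PiE K (\<lambda>k. Pow (A k)). h (\<lambda>k\<in>K. card (X k)))
      = (\<Sum>bs\<in>PiE K (\<lambda>k. {0..m k}). \<Sum>X | X \<in> PiE K (\<lambda>k. Pow (A k)) \<and> (\<lambda>k\<in>K. card (X k)) = bs.
           h (\<lambda>k\<in>K. card (X k)))"
    using assms by (intro sum.group[symmetric] finite_PiE) (auto simp: PiE_iff card[symmetric] fin card_mono)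
  also have "\<dots> = (\<Sum>bs\<in>PiE K (\<lambda>k. {0..m k}). of_nat (\<Prod>k\<in>K. m k choose bs k) * h bs)"
  proof (rule sum.cong[OF refl])
    fix bs assume bs: "bs \<in> PiE K (\<lambda>k. {0..m k})"
    have "(\<Sum>X | X \<in> PiE K (\<lambda>k. Pow (A k)) \<and> (\<lambda>k\<in>K. card (X k)) = bs. h (\<lambda>k\<in>K. card (X k)))
        = (\<Sum>X | X \<in> PiE K (\<lambda>k. Pow (A k)) \<and> (\<lambda>k\<in>K. card (X k)) = bs. h bs)"
      by (rule sum.cong) auto
    also have "\<dots> = of_nat (card (PiE K (\<lambda>k. {Y. Y \<subseteq> A k \<and> card Y = bs k}))) * h bs"
      by (simp add: fibre[OF bs])
    also have "card (PiE K (\<lambda>k. {Y. Y \<subseteq> A k \<and> card Y = bs k})) = (\<Prod>k\<in>K. m k choose bs k)"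
      using assms by (simp add: card_PiE n_subsets)
    finally show "(\<Sum>X | X \<in> PiE K (\<lambda>k. Pow (A k)) \<and> (\<lambda>k\<in>K. card (X k)) = bs. h (\<lambda>k\<in>K. card (X k)))
        = of_nat (\<Prod>k\<in>K. m k choose bs k) * h bs" .
  qed
  finally show ?thesis .
qed

lemma sum_Pow_Sigma_row_card:
  fixes g :: "('k \<Rightarrow> nat) \<Rightarrow> 'b::comm_ring_1"
  assumes "finite K" and fin: "\<And>k. k \<in> K \<Longrightarrow> finite (A k)" and "\<And>k. k \<in> K \<Longrightarrow> card (A k) = m k"
  shows "(\<Sum>S\<in>Pow (Sigma K A). (-1) ^ card S * g (\<lambda>k\<in>K. card {j. (k, j) \<in> S}))
       = (\<Sum>bs\<in>PiE K (\<lambda>k. {0..m k}). (-1) ^ (\<Sum>k\<in>K. bs k) * (\<Prod>k\<in>K. of_nat (m k choose bs k)) * g bs)"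
proof -
  have bij: "bij_betw (Sigma K) (PiE K (\<lambda>k. Pow (A k))) (Pow (Sigma K A))"
    by (rule bij_betwI[where g = "\<lambda>S. \<lambda>k\<in>K. {j. (k, j) \<in> S}"]) (force simp: PiE_iff extensional_def fun_eq_iff)+
  have "card (Sigma K X) = (\<Sum>k\<in>K. card (X k))" "(\<lambda>k\<in>K. card {j. (k, j) \<in> Sigma K X}) = (\<lambda>k\<in>K. card (X k))"
    if "X \<in> PiE K (\<lambda>k. Pow (A k))" for X
    using that assms by (auto simp: PiE_iff intro!: card_SigmaI dest: finite_subset)
  then have "(\<Sum>S\<in>Pow (Sigma K A). (-1) ^ card S * g (\<lambda>k\<in>K. card {j. (k, j) \<in> S}))
      = (\<Sum>X\<in>PiE K (\<lambda>k. Pow (A k)). (-1) ^ (\<Sum>k\<in>K. (\<lambda>k\<in>K. card (X k)) k) * g (\<lambda>k\<in>K. card (X k)))"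
    by (simp add: sum.reindex_bij_betw[OF bij, symmetric])
  also have "\<dots> = (\<Sum>bs\<in>PiE K (\<lambda>k. {0..m k}). of_nat (\<Prod>k\<in>K. m k choose bs k) * ((-1) ^ (\<Sum>k\<in>K. bs k) * g bs))"
    using assms by (intro sum_PiE_Pow_card[where h = "\<lambda>bs. (-1) ^ (\<Sum>k\<in>K. bs k) * g bs"])
  finally show ?thesis by (simp add: ac_simps)
qed

lemma sum_Pow_insert_Un_alternating:
  fixes f :: "'a set \<Rightarrow> 'b::comm_ring_1"
  assumes "finite A" "finite B" "A \<inter> B = {}" "p \<notin> A \<union> B"
  shows "(\<Sum>S\<in>Pow (insert p (A \<union> B)). (-1) ^ card S * f S)
    = (\<Sum>X\<in>Pow A. (-1) ^ card X * (\<Sum>Y\<in>Pow B. (-1) ^ card Y * (f (X \<union> Y) - f (insert p (X \<union> Y)))))"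
proof -
  have card: "card (X \<union> Y) = card X + card Y" "card (insert p (X \<union> Y)) = Suc (card X + card Y)"
    if "X \<subseteq> A" "Y \<subseteq> B" for X Y
  proof -
    have "finite X" "finite Y" "X \<inter> Y = {}" "p \<notin> X \<union> Y"
      using that assms by (auto intro: finite_subset)
    then show "card (X \<union> Y) = card X + card Y" "card (insert p (X \<union> Y)) = Suc (card X + card Y)"
      by (simp_all add: card_Un_disjoint)
  qed
  have "(\<Sum>S\<in>Pow (insert p (A \<union> B)). (-1) ^ card S * f S)
      = (\<Sum>X\<in>Pow A. \<Sum>Y\<in>Pow B. (-1) ^ card (X \<union> Y) * f (X \<union> Y)
          + (-1) ^ card (insert p (X \<union> Y)) * f (insert p (X \<union> Y)))"
    using assms by (simp add: sum_Pow_insert sum_Pow_Un sum.distrib)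
  also have "\<dots> = (\<Sum>X\<in>Pow A. (-1) ^ card X * (\<Sum>Y\<in>Pow B. (-1) ^ card Y * (f (X \<union> Y) - f (insert p (X \<union> Y)))))"
    by (intro sum.cong refl) (simp add: card sum_distrib_left power_add algebra_simps)
  finally show ?thesis .
qed

lemma sum_Pow_insert_Sigma_alternating:
  fixes f :: "('k \<times> 'j) set \<Rightarrow> 'b::comm_ring_1"
  assumes "finite K"
    and A: "\<And>k. k \<in> K \<Longrightarrow> finite (A k) \<and> card (A k) = a k"
    and B: "\<And>k. k \<in> K \<Longrightarrow> finite (B k) \<and> card (B k) = b k"
    and "Sigma K A \<inter> Sigma K B = {}" "p \<notin> Sigma K A \<union> Sigma K B"
    and g: "\<And>X Y. X \<subseteq> Sigma K A \<Longrightarrow> Y \<subseteq> Sigma K B \<Longrightarrow>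
      f (X \<union> Y) - f (insert p (X \<union> Y)) = g (\<lambda>k\<in>K. card {j. (k, j) \<in> X}) (\<lambda>k\<in>K. card {j. (k, j) \<in> Y})"
  shows "(\<Sum>S\<in>Pow (insert p (Sigma K A \<union> Sigma K B)). (-1) ^ card S * f S)
    = (\<Sum>as\<in>PiE K (\<lambda>k. {0..a k}). (-1) ^ (\<Sum>k\<in>K. as k) * (\<Prod>k\<in>K. of_nat (a k choose as k)) *
        (\<Sum>bs\<in>PiE K (\<lambda>k. {0..b k}). (-1) ^ (\<Sum>k\<in>K. bs k) * (\<Prod>k\<in>K. of_nat (b k choose bs k)) * g as bs))"
proof -
  have "finite (Sigma K A)" "finite (Sigma K B)"
    using assms by auto
  then have "(\<Sum>S\<in>Pow (insert p (Sigma K A \<union> Sigma K B)). (-1) ^ card S * f S)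
      = (\<Sum>X\<in>Pow (Sigma K A). (-1) ^ card X * (\<Sum>Y\<in>Pow (Sigma K B). (-1) ^ card Y *
          g (\<lambda>k\<in>K. card {j. (k, j) \<in> X}) (\<lambda>k\<in>K. card {j. (k, j) \<in> Y})))"
    using assms by (simp add: sum_Pow_insert_Un_alternating g)
  also have "\<dots> = (\<Sum>X\<in>Pow (Sigma K A). (-1) ^ card X *
      (\<Sum>bs\<in>PiE K (\<lambda>k. {0..b k}). (-1) ^ (\<Sum>k\<in>K. bs k) * (\<Prod>k\<in>K. of_nat (b k choose bs k)) *
        g (\<lambda>k\<in>K. card {j. (k, j) \<in> X}) bs))"
    using assms by (intro sum.cong refl arg_cong2[where f = "(*)"] sum_Pow_Sigma_row_card) auto
  also have "\<dots> = (\<Sum>as\<in>PiE K (\<lambda>k. {0..a k}). (-1) ^ (\<Sum>k\<in>K. as k) * (\<Prod>k\<in>K. of_nat (a k choose as k)) *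
      (\<Sum>bs\<in>PiE K (\<lambda>k. {0..b k}). (-1) ^ (\<Sum>k\<in>K. bs k) * (\<Prod>k\<in>K. of_nat (b k choose bs k)) * g as bs))"
    using assms by (intro sum_Pow_Sigma_row_card) auto
  finally show ?thesis .
qed

lemma (in finite_measure) finite_measure_Diff_UN_inclusion_exclusion:
  assumes "finite H" "E \<in> sets M" "\<And>i. i \<in> H \<Longrightarrow> B i \<in> sets M"
  shows "measure M (E - (\<Union>i\<in>H. B i)) = (\<Sum>S\<in>Pow H. (-1) ^ card S * measure M (E \<inter> (\<Inter>i\<in>S. B i)))"
  using assms
proof (induction H arbitrary: E rule: finite_induct)
  case (insert a H)
  have "E - (\<Union>i\<in>insert a H. B i) = (E - (\<Union>i\<in>H. B i)) - (E \<inter> B a - (\<Union>i\<in>H. B i))"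
    by blast
  then have "measure M (E - (\<Union>i\<in>insert a H. B i))
      = measure M (E - (\<Union>i\<in>H. B i)) - measure M (E \<inter> B a - (\<Union>i\<in>H. B i))"
    using insert.prems by (simp add: finite_measure_Diff sets.Diff sets.finite_UN insert.hyps Diff_mono)
  also have "\<dots> = (\<Sum>S\<in>Pow H. (-1) ^ card S * measure M (E \<inter> (\<Inter>i\<in>S. B i)))
      + (\<Sum>S\<in>Pow H. (-1) ^ card (insert a S) * measure M (E \<inter> (\<Inter>i\<in>insert a S. B i)))"
  proof -
    have "card (insert a S) = Suc (card S)" if "S \<in> Pow H" for S
      using that insert.hyps by (auto intro: card_insert_disjoint finite_subset)
    then have "(\<Sum>S\<in>Pow H. (-1) ^ card (insert a S) * measure M (E \<inter> (\<Inter>i\<in>insert a S. B i)))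
        = - (\<Sum>S\<in>Pow H. (-1) ^ card S * measure M ((E \<inter> B a) \<inter> (\<Inter>i\<in>S. B i)))"
      unfolding sum_negf[symmetric] by (intro sum.cong) (auto simp: Int_assoc)
    then show ?thesis using insert by simp
  qed
  also have "\<dots> = (\<Sum>S\<in>Pow (insert a H). (-1) ^ card S * measure M (E \<inter> (\<Inter>i\<in>S. B i)))"
    using insert.hyps by (simp add: sum_Pow_insert)
  finally show ?case .
qed simp

section \<open>Rearranging values on an interval\<close>

lemma image_mset_mset_set_split:
  fixes a b c :: nat
  assumes "a \<le> b" "b \<le> c"
  shows "image_mset f (mset_set {a..<c}) = image_mset f (mset_set {a..<b}) + image_mset f (mset_set {b..<c})"
proof -
  have "{a..<c} = {a..<b} \<union> {b..<c}" "{a..<b} \<inter> {b..<c} = {}" using assms by auto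
  then show ?thesis by (simp add: mset_set_Union)
qed

lemma image_mset_mset_set_const:
  assumes "\<And>x. x \<in> A \<Longrightarrow> f x = v"
  shows "image_mset f (mset_set A) = replicate_mset (card A) v"
proof -
  have "image_mset f (mset_set A) = image_mset (\<lambda>_. v) (mset_set A)"
    using assms by (cases "finite A") (auto intro: image_mset_cong)
  then show ?thesis by (simp add: image_mset_const_eq)
qed

lemma image_mset_mset_set_two_valued:
  assumes "finite A" "D \<subseteq> A" and "\<And>x. x \<in> A \<Longrightarrow> f x = (if x \<in> D then v else w)"
  shows "image_mset f (mset_set A) = replicate_mset (card D) v + replicate_mset (card A - card D) w"
proof -
  have "A = D \<union> (A - D)" using assms by blast
  then have "image_mset f (mset_set A) = image_mset f (mset_set D) + image_mset f (mset_set (A - D))"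
    using assms by (metis Diff_disjoint finite_Diff image_mset_union mset_set_Union rev_finite_subset)
  also have "\<dots> = replicate_mset (card D) v + replicate_mset (card A - card D) w"
    using assms by (subst (1 2) image_mset_mset_set_const) (auto simp: card_Diff_subset finite_subset)
  finally show ?thesis .
qed

lemma image_mset_mset_set_threshold:
  fixes a b c :: nat
  assumes "a \<le> c" "c \<le> b"
  shows "image_mset (\<lambda>j. if j < c then v else g j) (mset_set {a..<b})
    = replicate_mset (c - a) v + image_mset g (mset_set {c..<b})"
proof -
  have "image_mset (\<lambda>j. if j < c then v else g j) (mset_set {a..<c}) = replicate_mset (c - a) v"
    by (subst image_mset_mset_set_const) auto
  moreover have "image_mset (\<lambda>j. if j < c then v else g j) (mset_set {c..<b}) = image_mset g (mset_set {c..<b})"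
    by (rule image_mset_cong) auto
  ultimately show ?thesis using assms by (simp add: image_mset_mset_set_split[of a c b])
qed

lemma image_mset_mset_set_sort_two_valued:
  fixes a m :: nat
  assumes D: "D \<subseteq> {..<a}" and "a \<le> m"
  shows "image_mset (\<lambda>j. if j \<in> D then v else if j < a then w else v) (mset_set {..<m})
    = image_mset (\<lambda>j. if j < m - a + card D then v else w) (mset_set {..<m})"
proof -
  let ?f = "\<lambda>j. if j \<in> D then v else if j < a then w else v"
  have d: "card D \<le> a" using card_mono[OF _ D] by simp
  have "image_mset ?f (mset_set {0..<a}) = replicate_mset (card D) v + replicate_mset (a - card D) w"
    using image_mset_mset_set_two_valued[of "{0..<a}" D ?f v w] D by (auto simp: subset_eq)
  moreover have "image_mset ?f (mset_set {a..<m}) = replicate_mset (m - a) v"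
    using D by (subst image_mset_mset_set_const) auto
  ultimately show ?thesis using assms d
    by (simp add: atLeast0LessThan[symmetric] image_mset_mset_set_split[of 0 a m]
        image_mset_mset_set_threshold image_mset_const_eq multiset_eq_iff)
qed

lemma image_mset_mset_set_sort_four_valued:
  fixes l m e N :: nat
  assumes D: "D \<subseteq> {l..<m}" and J: "J \<subseteq> {m + e..<N}" and "l \<le> m" "m + e \<le> N"
  shows "image_mset (\<lambda>j. if j < l then a else if j < m then (if j \<in> D then a else b)
      else if j < m + e then c else if j \<in> J then b else d) (mset_set {..<N})
    = image_mset (\<lambda>j. if j < l + card D then a else if j < m + card J then b
      else if j < m + card J + e then c else d) (mset_set {..<N})"
proof -
  let ?f = "\<lambda>j. if j < l then a else if j < m then (if j \<in> D then a else b)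
      else if j < m + e then c else if j \<in> J then b else d"
  have cD: "card D \<le> m - l" using card_mono[OF _ D] by simp
  have cJ: "card J \<le> N - (m + e)" using card_mono[OF _ J] by simp
  have "image_mset ?f (mset_set {..<N}) = image_mset ?f (mset_set {0..<l}) + image_mset ?f (mset_set {l..<m})
      + image_mset ?f (mset_set {m..<m + e}) + image_mset ?f (mset_set {m + e..<N})"
    using assms by (simp add: atLeast0LessThan[symmetric] image_mset_mset_set_split[of 0 l N]
        image_mset_mset_set_split[of l m N] image_mset_mset_set_split[of m "m + e" N] add.assoc)
  also have "image_mset ?f (mset_set {0..<l}) = replicate_mset l a"
    by (subst image_mset_mset_set_const) auto
  also have "image_mset ?f (mset_set {l..<m}) = replicate_mset (card D) a + replicate_mset (m - l - card D) b"
    using image_mset_mset_set_two_valued[of "{l..<m}" D ?f a b] D by (auto simp: subset_eq)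
  also have "image_mset ?f (mset_set {m..<m + e}) = replicate_mset e c"
    using \<open>l \<le> m\<close> by (subst image_mset_mset_set_const) auto
  also have "image_mset ?f (mset_set {m + e..<N}) = replicate_mset (card J) b + replicate_mset (N - (m + e) - card J) d"
    using image_mset_mset_set_two_valued[of "{m + e..<N}" J ?f b d] J \<open>l \<le> m\<close> by (auto simp: subset_eq)
  also have "replicate_mset l a + (replicate_mset (card D) a + replicate_mset (m - l - card D) b)
      + replicate_mset e c + (replicate_mset (card J) b + replicate_mset (N - (m + e) - card J) d)
    = image_mset (\<lambda>j. if j < l + card D then a else if j < m + card J then b
      else if j < m + card J + e then c else d) (mset_set {..<N})"
    using assms cD cJ
    by (simp add: atLeast0LessThan[symmetric] image_mset_mset_set_threshold image_mset_const_eq multiset_eq_iff ac_simps)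
  finally show ?thesis .
qed

lemma image_mset_mset_set_eq_imp_permutes:
  fixes m :: nat
  assumes "image_mset f (mset_set {..<m}) = image_mset g (mset_set {..<m})"
  shows "\<exists>p. p permutes {..<m} \<and> (\<forall>j<m. f (p j) = g j)"
proof -
  have "mset (map g [0..<m]) = mset (map f [0..<m])"
    using assms by (simp add: atLeast0LessThan)
  then obtain p where p: "p permutes {..<m}" "permute_list p (map f [0..<m]) = map g [0..<m]"
    by (rule mset_eq_permutation) simp
  have "f (p j) = g j" if "j < m" for j
  proof -
    have "permute_list p (map f [0..<m]) ! j = map f [0..<m] ! p j"
      using p(1) that by (intro permute_list_nth) simp_all
    then show ?thesis using p permutes_in_image[OF p(1), of j] that by simp
  qed
  with p(1) show ?thesis by blast
qed

section \<open>Component lifetimes\<close>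

text \<open>Bounds describing the event of part (b): component \<open>(k, j)\<close> lies in \<open>(\<tau>, \<infinity>)\<close>,
  \<open>(s, \<tau>]\<close>, \<open>(s, s + \<delta>]\<close> (only for \<open>(i, ms i)\<close>) or \<open>(-\<infinity>, s]\<close>, according to its position \<open>j\<close>.\<close>

definition windows_lower :: "nat \<Rightarrow> (nat \<Rightarrow> nat) \<Rightarrow> (nat \<Rightarrow> nat) \<Rightarrow> real \<Rightarrow> real \<Rightarrow> nat \<Rightarrow> nat \<Rightarrow> real option"
  where "windows_lower i ls ms \<tau> s k j =
    (if j < ls k then Some \<tau> else if j < ms k + (if k = i then 1 else 0) then Some s else None)"

definition windows_upper ::
    "nat \<Rightarrow> (nat \<Rightarrow> nat) \<Rightarrow> (nat \<Rightarrow> nat) \<Rightarrow> real \<Rightarrow> real \<Rightarrow> real \<Rightarrow> nat \<Rightarrow> nat \<Rightarrow> real option"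
  where "windows_upper i ls ms \<tau> s \<delta> k j =
    (if j < ls k then None else if j < ms k then Some \<tau>
     else if j < ms k + (if k = i then 1 else 0) then Some (s + \<delta>) else Some s)"

lemma failed_in_windows_iff:
  fixes t :: "nat \<Rightarrow> real"
  assumes lm: "l \<le> m" "m \<le> N" and "k = i \<Longrightarrow> m < N"
  shows "(\<forall>j<l. t j > \<tau>) \<and> (\<forall>j. l \<le> j \<and> j < m \<longrightarrow> s < t j \<and> t j \<le> \<tau>) \<and>
      (k \<noteq> i \<longrightarrow> (\<forall>j. m \<le> j \<and> j < N \<longrightarrow> t j \<le> s)) \<and>
      (k = i \<longrightarrow> s < t m \<and> t m \<le> s + \<delta> \<and> (\<forall>j. m < j \<and> j < N \<longrightarrow> t j \<le> s))
    \<longleftrightarrow> (\<forall>j<N. if j < l then \<tau> < t j else if j < m then s < t j \<and> t j \<le> \<tau>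
      else if j < m + (if k = i then 1 else 0) then s < t j \<and> t j \<le> s + \<delta> else t j \<le> s)"
    (is "?A \<longleftrightarrow> ?B")
proof (cases "k = i")
  case True
  show ?thesis
  proof
    assume ?A then show ?B using True lm by (auto simp: not_less le_less)
  next
    assume B: ?B
    have "\<tau> < t j" if "j < l" for j using B[rule_format, of j] that lm by simp
    moreover have "s < t j \<and> t j \<le> \<tau>" if "l \<le> j" "j < m" for j using B[rule_format, of j] that lm by simp
    moreover have "s < t m \<and> t m \<le> s + \<delta>" using B[rule_format, of m] True assms by simp
    moreover have "t j \<le> s" if "m < j" "j < N" for j using B[rule_format, of j] that True lm by auto
    ultimately show ?A using True by blast
  qed
next
  case False
  then show ?thesis using lm by (auto simp: not_less)
qed

lemma measurable_pred_option_less [measurable (raw)]: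
  fixes f :: "'a \<Rightarrow> real"
  assumes [measurable]: "f \<in> borel_measurable N"
  shows "Measurable.pred N (\<lambda>x. pred_option (\<lambda>t. t < f x) c)"
  by (cases c) (simp_all, measurable)

lemma finite_idx [simp]: "finite (idx L n)"
  by (simp add: idx_def)

lemma mem_idx [simp]: "(k, j) \<in> idx L n \<longleftrightarrow> k < L \<and> j < n k"
  by (simp add: idx_def)

locale lifetimes = prob_space M for M :: "'a measure" +
  fixes T :: "nat \<Rightarrow> nat \<Rightarrow> 'a \<Rightarrow> real" and L :: nat and n :: "nat \<Rightarrow> nat"
  assumes T_measurable [measurable]: "k < L \<Longrightarrow> j < n k \<Longrightarrow> T k j \<in> borel_measurable M"
begin

definition survival_event :: "(nat \<Rightarrow> nat \<Rightarrow> real option) \<Rightarrow> 'a set" where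
  "survival_event \<theta> = {\<omega> \<in> space M. \<forall>k<L. \<forall>j<n k. pred_option (\<lambda>t. t < T k j \<omega>) (\<theta> k j)}"

definition window_event :: "(nat \<Rightarrow> nat \<Rightarrow> real option) \<Rightarrow> (nat \<Rightarrow> nat \<Rightarrow> real option) \<Rightarrow> 'a set" where
  "window_event lo hi = {\<omega> \<in> space M. \<forall>k<L. \<forall>j<n k.
     pred_option (\<lambda>t. t < T k j \<omega>) (lo k j) \<and> pred_option (\<lambda>t. T k j \<omega> \<le> t) (hi k j)}"

lemma sets_survival_event [measurable]: "survival_event \<theta> \<in> sets M"
  unfolding survival_event_def by measurable

text \<open>Inclusion-exclusion over the components carrying an upper bound \<open>hi\<close>, using that
  \<open>T \<le> h\<close> is the complement of \<open>h < T\<close>; as \<open>lo \<le> hi\<close>, the two lower bounds of such a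
  component combine into \<open>hi\<close>.\<close>
lemma measure_window_event:
  assumes "H \<subseteq> idx L n" and H: "\<And>k j. k < L \<Longrightarrow> j < n k \<Longrightarrow> (k, j) \<in> H \<longleftrightarrow> hi k j \<noteq> None"
    and lo_le_hi: "\<And>k j a b. k < L \<Longrightarrow> j < n k \<Longrightarrow> lo k j = Some a \<Longrightarrow> hi k j = Some b \<Longrightarrow> a \<le> b"
  shows "measure M (window_event lo hi)
    = (\<Sum>S\<in>Pow H. (-1) ^ card S * measure M (survival_event (\<lambda>k j. if (k, j) \<in> S then hi k j else lo k j)))"
proof -
  define B where "B = (\<lambda>(k, j). {\<omega> \<in> space M. the (hi k j) < T k j \<omega>})"
  have B_sets: "B x \<in> sets M" if "x \<in> H" for x
    using that \<open>H \<subseteq> idx L n\<close> unfolding B_def by (auto split: prod.split)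
  have hi_iff: "pred_option (\<lambda>t. T k j \<omega> \<le> t) (hi k j) \<longleftrightarrow> (k, j) \<notin> H \<or> \<omega> \<notin> B (k, j)"
    if "k < L" "j < n k" "\<omega> \<in> space M" for k j \<omega>
    using H[OF that(1,2)] that by (cases "hi k j") (auto simp: B_def)
  have window: "window_event lo hi = survival_event lo - (\<Union>x\<in>H. B x)"
    using \<open>H \<subseteq> idx L n\<close> unfolding window_event_def survival_event_def
    by (auto simp: hi_iff)
  have vertex: "survival_event lo \<inter> (\<Inter>x\<in>S. B x) = survival_event (\<lambda>k j. if (k, j) \<in> S then hi k j else lo k j)"
    if "S \<subseteq> H" for S
  proof -
    have "pred_option (\<lambda>t. t < T k j \<omega>) (lo k j) \<and> ((k, j) \<in> S \<longrightarrow> \<omega> \<in> B (k, j))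
      \<longleftrightarrow> pred_option (\<lambda>t. t < T k j \<omega>) (if (k, j) \<in> S then hi k j else lo k j)"
      if "k < L" "j < n k" "\<omega> \<in> space M" for k j \<omega>
      using H[OF that(1,2)] lo_le_hi[OF that(1,2)] \<open>S \<subseteq> H\<close> that
      by (cases "lo k j"; cases "hi k j") (auto simp: B_def intro: le_less_trans)
    moreover have "(\<forall>x\<in>S. \<omega> \<in> B x) \<longleftrightarrow> (\<forall>k<L. \<forall>j<n k. (k, j) \<in> S \<longrightarrow> \<omega> \<in> B (k, j))" for \<omega>
      using \<open>S \<subseteq> H\<close> \<open>H \<subseteq> idx L n\<close> by fastforce
    ultimately show ?thesis
      unfolding survival_event_def by blast
  qed
  have "finite H" using \<open>H \<subseteq> idx L n\<close> by (rule finite_subset) simp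
  then show ?thesis
    unfolding window
    using finite_measure_Diff_UN_inclusion_exclusion[OF \<open>finite H\<close> sets_survival_event B_sets]
    by (simp add: vertex)
qed

lemma tendsto_measure_survival_event_unbounded_below:
  "(\<lambda>m. measure M (survival_event (\<lambda>k j. Some (case \<theta> k j of None \<Rightarrow> - real m | Some t \<Rightarrow> t))))
    \<longlonglongrightarrow> measure M (survival_event \<theta>)"
proof -
  let ?E = "\<lambda>m. survival_event (\<lambda>k j. Some (case \<theta> k j of None \<Rightarrow> - real m | Some t \<Rightarrow> t))"
  have "incseq ?E"
  proof (intro monoI subsetI)
    fix m m' \<omega> assume "m \<le> m'" "\<omega> \<in> ?E m"
    moreover have "(case c of None \<Rightarrow> - real m' | Some t \<Rightarrow> t) \<le> (case c of None \<Rightarrow> - real m | Some t \<Rightarrow> t)" for c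
      using \<open>m \<le> m'\<close> by (cases c) simp_all
    ultimately show "\<omega> \<in> ?E m'"
      unfolding survival_event_def by auto (meson le_less_trans)
  qed
  moreover have "(\<Union>m. ?E m) = survival_event \<theta>"
  proof (intro equalityI subsetI)
    fix \<omega> assume \<omega>: "\<omega> \<in> survival_event \<theta>"
    have "\<forall>\<^sub>F m in sequentially. c < real m" for c
      using filterlim_real_sequentially unfolding filterlim_at_top_dense by blast
    then have "\<forall>\<^sub>F m in sequentially. \<forall>x\<in>idx L n. - T (fst x) (snd x) \<omega> < real m"
      by (intro eventually_ball_finite finite_idx) auto
    then obtain m where "\<forall>x\<in>idx L n. - T (fst x) (snd x) \<omega> < real m"
      unfolding eventually_sequentially by blast
    then have "- real m < T k j \<omega>" if "k < L" "j < n k" for k j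
      using that by (auto dest!: bspec[where x = "(k, j)"])
    then have "\<omega> \<in> ?E m"
      using \<omega> by (force simp: survival_event_def split: option.split)
    then show "\<omega> \<in> (\<Union>m. ?E m)" by blast
  next
    fix \<omega> assume "\<omega> \<in> (\<Union>m. ?E m)"
    then obtain m where "\<omega> \<in> ?E m" by blast
    moreover have "pred_option (\<lambda>t. t < x) c" if "(case c of None \<Rightarrow> - real m | Some t \<Rightarrow> t) < x" for c x
      using that by (cases c) simp_all
    ultimately show "\<omega> \<in> survival_event \<theta>"
      unfolding survival_event_def by simp
  qed
  moreover have "range ?E \<subseteq> sets M"
    by (auto intro: sets_survival_event)
  ultimately show ?thesis
    using finite_Lim_measure_incseq[of ?E] by simp
qed

lemma failed_in_windows_eq_window_event:
  assumes lm: "\<And>k. k < L \<Longrightarrow> ls k \<le> ms k \<and> ms k \<le> n k" and "ms i < n i"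
  shows "{\<omega> \<in> space M. \<forall>k<L.
          (\<forall>j<ls k. T k j \<omega> > \<tau>) \<and>
          (\<forall>j. ls k \<le> j \<and> j < ms k \<longrightarrow> s < T k j \<omega> \<and> T k j \<omega> \<le> \<tau>) \<and>
          (k \<noteq> i \<longrightarrow> (\<forall>j. ms k \<le> j \<and> j < n k \<longrightarrow> T k j \<omega> \<le> s)) \<and>
          (k = i \<longrightarrow> s < T k (ms k) \<omega> \<and> T k (ms k) \<omega> \<le> s + \<delta> \<and>
                     (\<forall>j. ms k < j \<and> j < n k \<longrightarrow> T k j \<omega> \<le> s))}
    = window_event (windows_lower i ls ms \<tau> s) (windows_upper i ls ms \<tau> s \<delta>)"
  unfolding window_event_def
proof (intro Collect_cong conj_cong refl all_cong imp_cong)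
  fix \<omega> k assume "k < L"
  have "k = i \<Longrightarrow> ms k < n k" using \<open>ms i < n i\<close> by simp
  from failed_in_windows_iff[where l = "ls k" and m = "ms k" and N = "n k" and t = "\<lambda>j. T k j \<omega>"
      and k = k and i = i and \<tau> = \<tau> and s = s and \<delta> = \<delta>, OF _ _ this] lm[OF \<open>k < L\<close>]
  show "((\<forall>j<ls k. T k j \<omega> > \<tau>) \<and>
      (\<forall>j. ls k \<le> j \<and> j < ms k \<longrightarrow> s < T k j \<omega> \<and> T k j \<omega> \<le> \<tau>) \<and>
      (k \<noteq> i \<longrightarrow> (\<forall>j. ms k \<le> j \<and> j < n k \<longrightarrow> T k j \<omega> \<le> s)) \<and>
      (k = i \<longrightarrow> s < T k (ms k) \<omega> \<and> T k (ms k) \<omega> \<le> s + \<delta> \<and>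
                 (\<forall>j. ms k < j \<and> j < n k \<longrightarrow> T k j \<omega> \<le> s)))
    \<longleftrightarrow> (\<forall>j<n k. pred_option (\<lambda>t. t < T k j \<omega>) (windows_lower i ls ms \<tau> s k j) \<and>
      pred_option (\<lambda>t. T k j \<omega> \<le> t) (windows_upper i ls ms \<tau> s \<delta> k j))"
    by (simp add: windows_lower_def windows_upper_def if_distrib[of "pred_option _"] cong: if_cong)
qed

end

locale exchangeable_lifetimes = lifetimes +
  assumes exchangeable: "\<And>\<sigma>. (\<And>k. k < L \<Longrightarrow> \<sigma> k permutes {..<n k}) \<Longrightarrow>
    distr M (PiM (idx L n) (\<lambda>_. borel)) (\<lambda>\<omega>. restrict (\<lambda>(k, j). T k (\<sigma> k j) \<omega>) (idx L n))
      = distr M (PiM (idx L n) (\<lambda>_. borel)) (\<lambda>\<omega>. restrict (\<lambda>(k, j). T k j \<omega>) (idx L n))"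
begin

lemma measure_permuted_survival_event:
  assumes \<sigma>: "\<And>k. k < L \<Longrightarrow> \<sigma> k permutes {..<n k}"
  shows "measure M {\<omega> \<in> space M. \<forall>k<L. \<forall>j<n k. pred_option (\<lambda>t. t < T k (\<sigma> k j) \<omega>) (\<theta> k j)}
    = measure M (survival_event \<theta>)"
proof -
  let ?N = "PiM (idx L n) (\<lambda>_. borel :: real measure)"
  let ?X = "\<lambda>\<sigma> \<omega>. restrict (\<lambda>(k, j). T k (\<sigma> k j) \<omega>) (idx L n)"
  let ?B = "{x \<in> space ?N. \<forall>k<L. \<forall>j<n k. pred_option (\<lambda>t. t < x (k, j)) (\<theta> k j)}"
  have B: "?B \<in> sets ?N" by measurable
  have X: "?X \<sigma>' \<in> measurable M ?N" if "\<And>k. k < L \<Longrightarrow> \<sigma>' k permutes {..<n k}" for \<sigma>'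
    by (intro measurable_restrict) (auto intro!: T_measurable, metis lessThan_iff permutes_in_image that)
  have preimage: "?X \<sigma>' -` ?B \<inter> space M
      = {\<omega> \<in> space M. \<forall>k<L. \<forall>j<n k. pred_option (\<lambda>t. t < T k (\<sigma>' k j) \<omega>) (\<theta> k j)}" for \<sigma>'
    by (auto simp: space_PiM PiE_iff)
  have "measure M {\<omega> \<in> space M. \<forall>k<L. \<forall>j<n k. pred_option (\<lambda>t. t < T k (\<sigma> k j) \<omega>) (\<theta> k j)}
      = measure (distr M ?N (?X \<sigma>)) ?B"
    using measure_distr[OF X[OF \<sigma>] B] preimage by simp
  also have "\<dots> = measure (distr M ?N (?X (\<lambda>k. id))) ?B"
    using exchangeable[OF \<sigma>] by simp
  also have "\<dots> = measure M (survival_event \<theta>)"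
    using measure_distr[OF X[of "\<lambda>k. id"] B] preimage[of "\<lambda>k. id"]
    by (simp add: survival_event_def)
  finally show ?thesis .
qed

lemma measure_survival_event_permute:
  assumes \<sigma>: "\<And>k. k < L \<Longrightarrow> \<sigma> k permutes {..<n k}"
  shows "measure M (survival_event (\<lambda>k j. \<theta> k (\<sigma> k j))) = measure M (survival_event \<theta>)"
proof -
  have reindex: "(\<forall>j<n k. P (\<sigma> k j)) \<longleftrightarrow> (\<forall>j<n k. P j)" if "k < L" for k P
    using permutes_image[OF \<sigma>[OF that]] by (metis lessThan_iff image_iff)
  have "(\<forall>j<n k. pred_option (\<lambda>t. t < T k (\<sigma> k j) \<omega>) (\<theta> k (\<sigma> k j)))
      \<longleftrightarrow> (\<forall>j<n k. pred_option (\<lambda>t. t < T k j \<omega>) (\<theta> k j))" if "k < L" for k \<omega>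
    using reindex[OF that, of "\<lambda>j. pred_option (\<lambda>t. t < T k j \<omega>) (\<theta> k j)"] by simp
  then have "survival_event \<theta>
      = {\<omega> \<in> space M. \<forall>k<L. \<forall>j<n k. pred_option (\<lambda>t. t < T k (\<sigma> k j) \<omega>) (\<theta> k (\<sigma> k j))}"
    by (simp add: survival_event_def)
  then show ?thesis
    using measure_permuted_survival_event[OF \<sigma>, of "\<lambda>k j. \<theta> k (\<sigma> k j)"] by simp
qed

lemma measure_survival_event_eq_if_rows_mset_eq:
  assumes rows: "\<And>k. k < L \<Longrightarrow> image_mset (\<theta> k) (mset_set {..<n k}) = image_mset (\<theta>' k) (mset_set {..<n k})"
  shows "measure M (survival_event \<theta>) = measure M (survival_event \<theta>')"
proof -
  define \<sigma> where "\<sigma> k = (SOME p. p permutes {..<n k} \<and> (\<forall>j<n k. \<theta> k (p j) = \<theta>' k j))" for k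
  have \<sigma>: "\<sigma> k permutes {..<n k} \<and> (\<forall>j<n k. \<theta> k (\<sigma> k j) = \<theta>' k j)" if "k < L" for k
    using image_mset_mset_set_eq_imp_permutes[OF rows[OF that]] unfolding \<sigma>_def by (rule someI_ex)
  then have "survival_event (\<lambda>k j. \<theta> k (\<sigma> k j)) = survival_event \<theta>'"
    by (auto simp: survival_event_def)
  then show ?thesis
    using measure_survival_event_permute[of \<sigma> \<theta>] \<sigma> by simp
qed

end

locale copula_lifetimes = lifetimes +
  fixes Fbar :: "nat \<Rightarrow> real \<Rightarrow> real" and C :: "(nat \<times> nat \<Rightarrow> real) \<Rightarrow> real"
  assumes reliability: "\<And>k j t. k < L \<Longrightarrow> j < n k \<Longrightarrow> Fbar k t = measure M {\<omega> \<in> space M. t < T k j \<omega>}"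
    and copula: "is_copula (idx L n) C"
    and survival_copula: "\<And>t. measure M {\<omega> \<in> space M. \<forall>k<L. \<forall>j<n k. t k j < T k j \<omega>}
      = C (restrict (\<lambda>(k, j). Fbar k (t k j)) (idx L n))"
begin

lemma reliability_bounds: "k < L \<Longrightarrow> j < n k \<Longrightarrow> Fbar k t \<in> {0..1}"
  by (simp add: reliability)

lemma reliability_tendsto_1:
  assumes "k < L" "j < n k"
  shows "(\<lambda>m. Fbar k (- real m)) \<longlonglongrightarrow> 1"
proof -
  interpret D: real_distribution "distr M borel (T k j)"
    using assms by simp
  have F: "Fbar k t = 1 - cdf (distr M borel (T k j)) t" for t
  proof -
    have "cdf (distr M borel (T k j)) t = measure M {\<omega> \<in> space M. T k j \<omega> \<le> t}"
      using assms by (simp add: cdf_def measure_distr vimage_def Int_def conj_commute)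
    also have "{\<omega> \<in> space M. T k j \<omega> \<le> t} = space M - {\<omega> \<in> space M. t < T k j \<omega>}"
      by auto
    finally show ?thesis using assms by (simp add: reliability prob_compl)
  qed
  moreover have "filterlim (\<lambda>m. - real m) at_bot sequentially"
    by (simp add: filterlim_uminus_at_bot filterlim_real_sequentially)
  then have "(\<lambda>m. cdf (distr M borel (T k j)) (- real m)) \<longlonglongrightarrow> 0"
    by (rule filterlim_compose[OF D.cdf_lim_at_bot])
  then have "(\<lambda>m. 1 - cdf (distr M borel (T k j)) (- real m)) \<longlonglongrightarrow> 1 - 0"
    by (intro tendsto_diff tendsto_const)
  then show ?thesis by (simp add: F)
qed

lemma measure_survival_event:
  "measure M (survival_event \<theta>)
    = C (restrict (\<lambda>(k, j). case \<theta> k j of None \<Rightarrow> 1 | Some t \<Rightarrow> Fbar k t) (idx L n))"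
proof -
  let ?t = "\<lambda>m k j. case \<theta> k j of None \<Rightarrow> - real m | Some t \<Rightarrow> t"
  let ?u = "\<lambda>m. restrict (\<lambda>(k, j). Fbar k (?t m k j)) (idx L n)"
  let ?v = "restrict (\<lambda>(k, j). case \<theta> k j of None \<Rightarrow> 1 | Some t \<Rightarrow> Fbar k t) (idx L n)"
  have "measure M (survival_event (\<lambda>k j. Some (?t m k j))) = C (?u m)" for m
    using survival_copula[of "?t m"] by (simp add: survival_event_def)
  then have "(\<lambda>m. C (?u m)) \<longlonglongrightarrow> measure M (survival_event \<theta>)"
    using tendsto_measure_survival_event_unbounded_below[of \<theta>] by simp
  moreover have "(\<lambda>m. C (?u m)) \<longlonglongrightarrow> C ?v"
  proof -
    have "?u m \<in> idx L n \<rightarrow>\<^sub>E {0..1}" "?v \<in> idx L n \<rightarrow>\<^sub>E {0..1}" for m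
      using reliability_bounds by (auto split: option.split)
    then have bound: "norm (C (?u m) - C ?v) \<le> (\<Sum>i\<in>idx L n. \<bar>?u m i - ?v i\<bar>)" for m
      unfolding real_norm_def by (intro copula_Lipschitz[OF copula])
    have null: "(\<lambda>m. \<Sum>i\<in>idx L n. \<bar>?u m i - ?v i\<bar>) \<longlonglongrightarrow> 0"
    proof (intro tendsto_null_sum)
      fix i assume "i \<in> idx L n"
      then obtain k j where i: "i = (k, j)" "k < L" "j < n k" by (cases i) auto
      have "(\<lambda>m. \<bar>Fbar k (- real m) - 1\<bar>) \<longlonglongrightarrow> \<bar>1 - 1\<bar>"
        by (intro tendsto_intros reliability_tendsto_1[OF i(2,3)])
      then show "(\<lambda>m. \<bar>?u m i - ?v i\<bar>) \<longlonglongrightarrow> 0"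
        using i by (cases "\<theta> k j") simp_all
    qed
    have "(\<lambda>m. C (?u m) - C ?v) \<longlonglongrightarrow> 0"
      by (rule Lim_null_comparison[OF always_eventually[OF allI[OF bound]] null])
    then show ?thesis by (simp add: LIM_zero_iff)
  qed
  ultimately show ?thesis by (rule LIMSEQ_unique)
qed

end

locale exchangeable_copula_lifetimes = exchangeable_lifetimes + copula_lifetimes
begin

lemma measure_failed_prefix:
  assumes js: "\<And>k. k < L \<Longrightarrow> js k \<le> n k"
  shows "measure M {\<omega> \<in> space M. \<forall>k<L. (\<forall>j<js k. T k j \<omega> \<le> \<tau>) \<and> (\<forall>j. js k \<le> j \<and> j < n k \<longrightarrow> \<tau> < T k j \<omega>)}
    = (\<Sum>bs\<in>PiE {..<L} (\<lambda>k. {0..js k}). (-1) ^ (\<Sum>k<L. bs k) * (\<Prod>k<L. real (js k choose bs k)) *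
        C (restrict (\<lambda>(k, j). if j < n k - js k + bs k then Fbar k \<tau> else 1) (idx L n)))"
proof -
  define lo where "lo k j = (if j < js k then None else Some \<tau>)" for k j
  define hi where "hi k j = (if j < js k then Some \<tau> else None)" for k j
  define H where "H = Sigma {..<L} (\<lambda>k. {..<js k})"
  define g where "g bs = C (restrict (\<lambda>(k, j). if j < n k - js k + bs k then Fbar k \<tau> else 1) (idx L n))" for bs
  have "{\<omega> \<in> space M. \<forall>k<L. (\<forall>j<js k. T k j \<omega> \<le> \<tau>) \<and> (\<forall>j. js k \<le> j \<and> j < n k \<longrightarrow> \<tau> < T k j \<omega>)}
      = window_event lo hi"
    using js by (auto simp: window_event_def lo_def hi_def) (meson le_less_trans not_le)+
  also have "measure M (window_event lo hi)
      = (\<Sum>S\<in>Pow H. (-1) ^ card S * measure M (survival_event (\<lambda>k j. if (k, j) \<in> S then hi k j else lo k j)))"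
    using js by (intro measure_window_event) (auto simp: H_def lo_def hi_def split: if_splits, meson js less_le_trans)
  also have "\<dots> = (\<Sum>S\<in>Pow H. (-1) ^ card S * g (\<lambda>k\<in>{..<L}. card {j. (k, j) \<in> S}))"
  proof (intro sum.cong refl arg_cong2[where f = "(*)"])
    fix S assume "S \<in> Pow H"
    then have S: "{j. (k, j) \<in> S} \<subseteq> {..<js k}" for k by (auto simp: H_def)
    let ?sorted = "\<lambda>k j. if j < n k - js k + card {j. (k, j) \<in> S} then Some \<tau> else None"
    have "measure M (survival_event (\<lambda>k j. if (k, j) \<in> S then hi k j else lo k j))
        = measure M (survival_event ?sorted)"
    proof (rule measure_survival_event_eq_if_rows_mset_eq)
      fix k assume "k < L"
      have "(\<lambda>j. if (k, j) \<in> S then hi k j else lo k j)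
          = (\<lambda>j. if j \<in> {j. (k, j) \<in> S} then Some \<tau> else if j < js k then None else Some \<tau>)"
        using S by (auto simp: hi_def lo_def fun_eq_iff)
      then show "image_mset (\<lambda>j. if (k, j) \<in> S then hi k j else lo k j) (mset_set {..<n k})
          = image_mset (?sorted k) (mset_set {..<n k})"
        using image_mset_mset_set_sort_two_valued[OF S js[OF \<open>k < L\<close>]] by simp
    qed
    also have "\<dots> = g (\<lambda>k\<in>{..<L}. card {j. (k, j) \<in> S})"
      unfolding measure_survival_event g_def by (intro arg_cong[where f = C] restrict_ext) auto
    finally show "measure M (survival_event (\<lambda>k j. if (k, j) \<in> S then hi k j else lo k j))
        = g (\<lambda>k\<in>{..<L}. card {j. (k, j) \<in> S})" .
  qed
  also have "\<dots> = (\<Sum>bs\<in>PiE {..<L} (\<lambda>k. {0..js k}). (-1) ^ (\<Sum>k<L. bs k) * (\<Prod>k<L. real (js k choose bs k)) * g bs)"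
    unfolding H_def by (rule sum_Pow_Sigma_row_card) auto
  finally show ?thesis by (simp add: g_def)
qed

lemma measure_survival_event_sort_blocks:
  assumes lm: "\<And>k. k < L \<Longrightarrow> ls k \<le> ms k \<and> ms k + e k \<le> n k"
    and Y: "Y \<subseteq> Sigma {..<L} (\<lambda>k. {ls k..<ms k})" and X: "X \<subseteq> Sigma {..<L} (\<lambda>k. {ms k + e k..<n k})"
  shows "measure M (survival_event (\<lambda>k j. if j < ls k then Some a
      else if j < ms k then (if (k, j) \<in> Y then Some a else Some b)
      else if j < ms k + e k then c else if (k, j) \<in> X then Some b else None))
    = C (restrict (\<lambda>(k, j). if j < ls k + card {j. (k, j) \<in> Y} then Fbar k a
      else if j < ms k + card {j. (k, j) \<in> X} then Fbar k b
      else if j < ms k + card {j. (k, j) \<in> X} + e k then (case c of None \<Rightarrow> 1 | Some t \<Rightarrow> Fbar k t)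
      else 1) (idx L n))"
proof -
  let ?sorted = "\<lambda>k j. if j < ls k + card {j. (k, j) \<in> Y} then Some a
    else if j < ms k + card {j. (k, j) \<in> X} then Some b
    else if j < ms k + card {j. (k, j) \<in> X} + e k then c else None"
  have "measure M (survival_event (\<lambda>k j. if j < ls k then Some a
      else if j < ms k then (if (k, j) \<in> Y then Some a else Some b)
      else if j < ms k + e k then c else if (k, j) \<in> X then Some b else None))
    = measure M (survival_event ?sorted)"
  proof (rule measure_survival_event_eq_if_rows_mset_eq)
    fix k assume "k < L"
    have "{j. (k, j) \<in> Y} \<subseteq> {ls k..<ms k}" "{j. (k, j) \<in> X} \<subseteq> {ms k + e k..<n k}"
      using X Y by auto
    from image_mset_mset_set_sort_four_valued[OF this lm[OF \<open>k < L\<close>, THEN conjunct1]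
        lm[OF \<open>k < L\<close>, THEN conjunct2], of "Some a" "Some b" c None]
    show "image_mset (\<lambda>j. if j < ls k then Some a
          else if j < ms k then (if (k, j) \<in> Y then Some a else Some b)
          else if j < ms k + e k then c else if (k, j) \<in> X then Some b else None) (mset_set {..<n k})
        = image_mset (?sorted k) (mset_set {..<n k})"
      by (simp only: mem_Collect_eq)
  qed
  also have "\<dots> = C (restrict (\<lambda>(k, j). if j < ls k + card {j. (k, j) \<in> Y} then Fbar k a
      else if j < ms k + card {j. (k, j) \<in> X} then Fbar k b
      else if j < ms k + card {j. (k, j) \<in> X} + e k then (case c of None \<Rightarrow> 1 | Some t \<Rightarrow> Fbar k t)
      else 1) (idx L n))"
    unfolding measure_survival_event by (intro arg_cong[where f = C] restrict_ext) auto
  finally show ?thesis .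
qed

lemma measure_windows_vertex:
  assumes "i < L" and lm: "\<And>k. k < L \<Longrightarrow> ls k \<le> ms k \<and> ms k \<le> n k" and "ms i < n i"
    and X: "X \<subseteq> Sigma {..<L} (\<lambda>k. {ms k + (if k = i then 1 else 0)..<n k})"
    and Y: "Y \<subseteq> Sigma {..<L} (\<lambda>k. {ls k..<ms k})" and S: "S - {(i, ms i)} = X \<union> Y"
  shows "measure M (survival_event
      (\<lambda>k j. if (k, j) \<in> S then windows_upper i ls ms \<tau> s \<delta> k j else windows_lower i ls ms \<tau> s k j))
    = C (restrict (\<lambda>(k, j). if j < ls k + card {j. (k, j) \<in> Y} then Fbar k \<tau>
        else if j < ms k + card {j. (k, j) \<in> X} then Fbar k s
        else if j < ms k + card {j. (k, j) \<in> X} + (if k = i then 1 else 0)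
          then Fbar k (if (i, ms i) \<in> S then s + \<delta> else s)
        else 1) (idx L n))"
proof -
  let ?e = "\<lambda>k. if k = i then 1 else 0 :: nat"
  have lme: "ls k \<le> ms k \<and> ms k + ?e k \<le> n k" if "k < L" for k
    using lm[OF that] \<open>ms i < n i\<close> by auto
  have "(if (k, j) \<in> S then windows_upper i ls ms \<tau> s \<delta> k j else windows_lower i ls ms \<tau> s k j)
    = (if j < ls k then Some \<tau> else if j < ms k then (if (k, j) \<in> Y then Some \<tau> else Some s)
       else if j < ms k + ?e k then Some (if (i, ms i) \<in> S then s + \<delta> else s)
       else if (k, j) \<in> X then Some s else None)" for k j
  proof -
    have "(k, j) \<in> S \<longleftrightarrow> ((k, j) = (i, ms i) \<and> (i, ms i) \<in> S) \<or> (k, j) \<in> X \<or> (k, j) \<in> Y"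
      using S by blast
    moreover have "(k, j) \<in> X \<Longrightarrow> ls k \<le> ms k \<and> ms k + ?e k \<le> j" "(k, j) \<in> Y \<Longrightarrow> ls k \<le> j \<and> j < ms k"
      using X Y lme by auto
    moreover have "(k, j) = (i, ms i) \<Longrightarrow> ls k \<le> j"
      using lm[OF \<open>i < L\<close>] by auto
    ultimately show ?thesis
      by (cases "j < ls k"; cases "j < ms k"; cases "j < ms k + ?e k")
        (auto simp: windows_upper_def windows_lower_def split: if_splits)
  qed
  then have "measure M (survival_event
      (\<lambda>k j. if (k, j) \<in> S then windows_upper i ls ms \<tau> s \<delta> k j else windows_lower i ls ms \<tau> s k j))
    = measure M (survival_event (\<lambda>k j. if j < ls k then Some \<tau>
       else if j < ms k then (if (k, j) \<in> Y then Some \<tau> else Some s)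
       else if j < ms k + ?e k then Some (if (i, ms i) \<in> S then s + \<delta> else s)
       else if (k, j) \<in> X then Some s else None))"
    by simp
  also have "\<dots> = C (restrict (\<lambda>(k, j). if j < ls k + card {j. (k, j) \<in> Y} then Fbar k \<tau>
        else if j < ms k + card {j. (k, j) \<in> X} then Fbar k s
        else if j < ms k + card {j. (k, j) \<in> X} + ?e k
          then Fbar k (if (i, ms i) \<in> S then s + \<delta> else s)
        else 1) (idx L n))"
    using X Y by (subst measure_survival_event_sort_blocks[OF lme]) (auto intro!: arg_cong[where f = C] restrict_ext)
  finally show ?thesis .
qed

lemma measure_failed_in_windows:
  assumes i: "i < L" and lm: "\<And>k. k < L \<Longrightarrow> ls k \<le> ms k \<and> ms k \<le> n k" and "ms i < n i"
    and "s < s + \<delta>" "s < \<tau>"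
  shows "measure M {\<omega> \<in> space M. \<forall>k<L.
          (\<forall>j<ls k. T k j \<omega> > \<tau>) \<and>
          (\<forall>j. ls k \<le> j \<and> j < ms k \<longrightarrow> s < T k j \<omega> \<and> T k j \<omega> \<le> \<tau>) \<and>
          (k \<noteq> i \<longrightarrow> (\<forall>j. ms k \<le> j \<and> j < n k \<longrightarrow> T k j \<omega> \<le> s)) \<and>
          (k = i \<longrightarrow> s < T k (ms k) \<omega> \<and> T k (ms k) \<omega> \<le> s + \<delta> \<and>
                     (\<forall>j. ms k < j \<and> j < n k \<longrightarrow> T k j \<omega> \<le> s))}
      = (\<Sum>js\<in>PiE {..<L} (\<lambda>k. {0..(if k = i then n k - ms k - 1 else n k - ms k)}).
          (-1) ^ (\<Sum>k<L. js k) *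
          (\<Prod>k<L. real ((if k = i then n k - ms k - 1 else n k - ms k) choose js k)) *
          (\<Sum>ds\<in>PiE {..<L} (\<lambda>k. {0..ms k - ls k}).
            (-1) ^ (\<Sum>k<L. ds k) * (\<Prod>k<L. real ((ms k - ls k) choose ds k)) *
            (C (restrict (\<lambda>(k, j).
                  if j < ls k + ds k then Fbar k \<tau>
                  else if j < ms k + js k + (if k = i then 1 else 0) then Fbar k s
                  else 1) (idx L n))
           - C (restrict (\<lambda>(k, j).
                  if j < ls k + ds k then Fbar k \<tau>
                  else if j < ms k + js k then Fbar k s
                  else if k = i \<and> j = ms k + js k then Fbar k (s + \<delta>)
                  else 1) (idx L n)))))" (is "_ = ?rhs")
proof -
  let ?p = "(i, ms i)"
  let ?Last = "Sigma {..<L} (\<lambda>k. {ms k + (if k = i then 1 else 0)..<n k})"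
  let ?Mid = "Sigma {..<L} (\<lambda>k. {ls k..<ms k})"
  let ?\<theta> = "\<lambda>S k j. if (k, j) \<in> S then windows_upper i ls ms \<tau> s \<delta> k j else windows_lower i ls ms \<tau> s k j"
  have "measure M (window_event (windows_lower i ls ms \<tau> s) (windows_upper i ls ms \<tau> s \<delta>))
      = (\<Sum>S\<in>Pow (insert ?p (?Last \<union> ?Mid)). (-1) ^ card S * measure M (survival_event (?\<theta> S)))"
  proof (rule measure_window_event)
    have "\<forall>k<L. ls k \<le> ms k \<and> ms k \<le> n k" using lm by blast
    then show "insert ?p (?Last \<union> ?Mid) \<subseteq> idx L n"
      "\<And>k j. k < L \<Longrightarrow> j < n k \<Longrightarrow> (k, j) \<in> insert ?p (?Last \<union> ?Mid) \<longleftrightarrow> windows_upper i ls ms \<tau> s \<delta> k j \<noteq> None"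
      using i \<open>ms i < n i\<close> by (auto simp: windows_upper_def split: if_splits)
    show "\<And>k j a b. windows_lower i ls ms \<tau> s k j = Some a \<Longrightarrow> windows_upper i ls ms \<tau> s \<delta> k j = Some b \<Longrightarrow> a \<le> b"
      using \<open>s < \<tau>\<close> \<open>s < s + \<delta>\<close> by (auto simp: windows_lower_def windows_upper_def split: if_splits)
  qed
  also have "\<dots> = ?rhs"
  proof (rule sum_Pow_insert_Sigma_alternating)
    fix X Y assume X: "X \<subseteq> ?Last" and Y: "Y \<subseteq> ?Mid"
    then have "?p \<notin> X \<union> Y" by auto
    then have "insert ?p (X \<union> Y) - {?p} = X \<union> Y" "X \<union> Y - {?p} = X \<union> Y" by auto
    with \<open>?p \<notin> X \<union> Y\<close> measure_windows_vertex[OF i lm \<open>ms i < n i\<close> X Y, of "X \<union> Y"]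
      measure_windows_vertex[OF i lm \<open>ms i < n i\<close> X Y, of "insert ?p (X \<union> Y)"]
    show "measure M (survival_event (?\<theta> (X \<union> Y))) - measure M (survival_event (?\<theta> (insert ?p (X \<union> Y))))
      = C (restrict (\<lambda>(k, j).
                  if j < ls k + (\<lambda>k\<in>{..<L}. card {j. (k, j) \<in> Y}) k then Fbar k \<tau>
                  else if j < ms k + (\<lambda>k\<in>{..<L}. card {j. (k, j) \<in> X}) k + (if k = i then 1 else 0) then Fbar k s
                  else 1) (idx L n))
        - C (restrict (\<lambda>(k, j).
                  if j < ls k + (\<lambda>k\<in>{..<L}. card {j. (k, j) \<in> Y}) k then Fbar k \<tau>
                  else if j < ms k + (\<lambda>k\<in>{..<L}. card {j. (k, j) \<in> X}) k then Fbar k s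
                  else if k = i \<and> j = ms k + (\<lambda>k\<in>{..<L}. card {j. (k, j) \<in> X}) k then Fbar k (s + \<delta>)
                  else 1) (idx L n))"
      by (simp, intro arg_cong2[where f = "(-)"] arg_cong[where f = C] restrict_ext) auto
  qed (use \<open>ms i < n i\<close> in auto)
  finally show ?thesis
    using failed_in_windows_eq_window_event[OF lm \<open>ms i < n i\<close>] by simp
qed

end

theorem theorem2:
  fixes M :: "'a measure"
    and T :: "nat \<Rightarrow> nat \<Rightarrow> 'a \<Rightarrow> real"
    and Fbar :: "nat \<Rightarrow> real \<Rightarrow> real"
    and C :: "(nat \<times> nat \<Rightarrow> real) \<Rightarrow> real"
    and L :: nat and n :: "nat \<Rightarrow> nat"
  assumes prob: "prob_space M"
    and L: "L \<ge> 1"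
    and meas: "\<forall>k<L. \<forall>j<n k. T k j \<in> borel_measurable M"
    and rel: "\<forall>k<L. \<forall>j<n k. \<forall>t. Fbar k t = measure M {\<omega>\<in>space M. T k j \<omega> > t}"
    and exch: "\<forall>\<sigma>. (\<forall>k<L. \<sigma> k permutes {..<n k}) \<longrightarrow>
        distr M (PiM (idx L n) (\<lambda>_. borel)) (\<lambda>\<omega>. restrict (\<lambda>(k,j). T k (\<sigma> k j) \<omega>) (idx L n))
      = distr M (PiM (idx L n) (\<lambda>_. borel)) (\<lambda>\<omega>. restrict (\<lambda>(k,j). T k j \<omega>) (idx L n))"
    and cop: "is_copula (idx L n) C"
    and joint: "\<forall>t :: nat \<Rightarrow> nat \<Rightarrow> real.
        measure M {\<omega>\<in>space M. \<forall>k<L. \<forall>j<n k. T k j \<omega> > t k j}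
      = C (restrict (\<lambda>(k,j). Fbar k (t k j)) (idx L n))"
  shows
   "(\<forall>\<tau>>0. \<forall>js. (\<forall>k<L. js k \<le> n k) \<longrightarrow>
      measure M {\<omega>\<in>space M. \<forall>k<L. (\<forall>j<js k. T k j \<omega> \<le> \<tau>) \<and>
                                    (\<forall>j. js k \<le> j \<and> j < n k \<longrightarrow> T k j \<omega> > \<tau>)}
      = (\<Sum>bs\<in>PiE {..<L} (\<lambda>k. {0..js k}).
           (-1::real) ^ (\<Sum>k<L. bs k) * (\<Prod>k<L. real (js k choose bs k)) *
           C (restrict (\<lambda>(k,j). if j < n k - js k + bs k then Fbar k \<tau> else 1) (idx L n))))
    \<and>
    (\<forall>i<L. \<forall>ls ms. \<forall>s \<delta> \<tau>.
      (\<forall>k<L. ls k \<le> ms k \<and> ms k \<le> n k) \<and> ms i < n i \<and>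
      0 < s \<and> s < s + \<delta> \<and> s < \<tau> \<longrightarrow>
      measure M {\<omega>\<in>space M. \<forall>k<L.
          (\<forall>j<ls k. T k j \<omega> > \<tau>) \<and>
          (\<forall>j. ls k \<le> j \<and> j < ms k \<longrightarrow> s < T k j \<omega> \<and> T k j \<omega> \<le> \<tau>) \<and>
          (k \<noteq> i \<longrightarrow> (\<forall>j. ms k \<le> j \<and> j < n k \<longrightarrow> T k j \<omega> \<le> s)) \<and>
          (k = i \<longrightarrow> s < T k (ms k) \<omega> \<and> T k (ms k) \<omega> \<le> s + \<delta> \<and>
                     (\<forall>j. ms k < j \<and> j < n k \<longrightarrow> T k j \<omega> \<le> s))}
      = (\<Sum>js\<in>PiE {..<L} (\<lambda>k. {0..(if k = i then n k - ms k - 1 else n k - ms k)}).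
          (-1::real) ^ (\<Sum>k<L. js k) *
          (\<Prod>k<L. real ((if k = i then n k - ms k - 1 else n k - ms k) choose js k)) *
          (\<Sum>ds\<in>PiE {..<L} (\<lambda>k. {0..ms k - ls k}).
            (-1::real) ^ (\<Sum>k<L. ds k) * (\<Prod>k<L. real ((ms k - ls k) choose ds k)) *
            (C (restrict (\<lambda>(k,j).
                  if j < ls k + ds k then Fbar k \<tau>
                  else if j < ms k + js k + (if k = i then 1 else 0) then Fbar k s
                  else 1) (idx L n))
           - C (restrict (\<lambda>(k,j).
                  if j < ls k + ds k then Fbar k \<tau>
                  else if j < ms k + js k then Fbar k s
                  else if k = i \<and> j = ms k + js k then Fbar k (s + \<delta>)
                  else 1) (idx L n))))))"
proof -
  have "lifetimes M T L n"
    using prob meas by (intro lifetimes.intro lifetimes_axioms.intro) blast+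
  then interpret exchangeable_copula_lifetimes M T L n Fbar C
    using exch rel cop joint
    by (intro exchangeable_copula_lifetimes.intro exchangeable_lifetimes.intro copula_lifetimes.intro
        exchangeable_lifetimes_axioms.intro copula_lifetimes_axioms.intro) blast+
  show ?thesis
    by (intro conjI allI impI measure_failed_prefix measure_failed_in_windows) simp_all
qed
end
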